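(* Let $G$ be a finite simple graph with at least one vertex. Then $\ell(G)=c(G)$ if and only if $G$ is a CL-graph.
   Context: For a connected graph $H$, $\ell(H)$ denotes the length (number of edges) of a longest induced path in $H$; for an arbitrary graph $G$ with connected components $G_1,\dots,G_t$, $\ell(G)=\ell(G_1)+\cdots+\ell(G_t)$. $c(G)$ denotes the number of maximal cliques of $G$ (a clique is a set of pairwise adjacent vertices). Intersection graph: given a finite list of sets $S_1,\dots,S_m$, the intersection graph on this list has one vertex for each $S_i$ (distinct indices give distinct vertices), and the vertices corresponding to $S_i$ and $S_j$ ($i\neq j$) are adjacent iff $S_i\cap S_j\neq\emptyset$. Connected CL-graph: let $\ell\in\mathbb{N}=\{1,2,\dots\}$ and $r\in\mathbb{N}_0=\{0,1,2,\dots\}$, and let $J_0,J_1,\dots,J_\ell,I_1,\dots,I_r$ be subsets of $\mathbb{R}$ such that: (i) $J_0=\{0\}$ and $J_j=[j-1,j]$ for $1\le j\le \ell$; (ii) for each $1\le i\le r$ there is some $t\in\mathbb{N}$ with $I_i=[a_1,b_1]\cup[a_2,b_2]\cup\cdots\cup[a_t,b_t]$, where $a_1,\dots,a_t\in\mathbb{N}_0$, $b_1,\dots,b_t\in\mathbb{R}$, $a_1<b_1<a_2<b_2<\cdots<a_t<b_t<\ell$, and $a_{k+1}-b_k>2$ for all $1\le k\le t-1$; (iii) if $\{I_{i_1},\dots,I_{i_t}\}\subseteq\{I_1,\dots,I_r\}$ satisfies $I_{i_p}\cap I_{i_q}\neq\emptyset$ for all $1\le p<q\le t$, then $\bigcap_{k=1}^t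 I_{i_k}\neq\emptyset$; (iv) if $I_p\cap I_q\neq\emptyset$ and $j\in I_p\setminus I_q$ for some $j\in\mathbb{N}_0$, then ($j+1\notin I_p$ implies $j+1\notin I_q$) and ($j-1\notin I_p$ implies $j-1\notin I_q$). The intersection graph on $J_0,\dots,J_\ell,I_1,\dots,I_r$ is called a connected CL-graph. A graph is a CL-graph if every connected component of it is isomorphic to a connected CL-graph. *)

theory Defs
  imports Complex_Main
begin

text \<open>A finite simple graph is given by a finite vertex set V and an edge relation
  E (only its restriction to V matters), assumed symmetric and irreflexive on V.\<close>

definition reach :: "'a set \<Rightarrow> ('a \<Rightarrow> 'a \<Rightarrow> bool) \<Rightarrow> 'a \<Rightarrow> 'a \<Rightarrow> bool" where
  "reach V E = (\<lambda>x y. x \<in> V \<and> y \<in> V \<and> E x y)\<^sup>*\<^sup>*"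

definition component :: "'a set \<Rightarrow> ('a \<Rightarrow> 'a \<Rightarrow> bool) \<Rightarrow> 'a \<Rightarrow> 'a set" where
  "component V E v = {u \<in> V. reach V E v u}"

definition components :: "'a set \<Rightarrow> ('a \<Rightarrow> 'a \<Rightarrow> bool) \<Rightarrow> 'a set set" where
  "components V E = component V E ` V"

text \<open>Induced path given as list of vertices v_0,...,v_k; its length is k.\<close>
definition induced_path :: "'a set \<Rightarrow> ('a \<Rightarrow> 'a \<Rightarrow> bool) \<Rightarrow> 'a list \<Rightarrow> bool" where
  "induced_path V E xs \<longleftrightarrow> xs \<noteq> [] \<and> distinct xs \<and> set xs \<subseteq> V \<and>
     (\<forall>i < length xs. \<forall>j < length xs. i < j \<longrightarrow> (E (xs ! i) (xs ! j) \<longleftrightarrow> j = i + 1))"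

definition lip :: "'a set \<Rightarrow> ('a \<Rightarrow> 'a \<Rightarrow> bool) \<Rightarrow> nat" where
  "lip C E = Max {length xs - 1 | xs. induced_path C E xs}"

definition ell :: "'a set \<Rightarrow> ('a \<Rightarrow> 'a \<Rightarrow> bool) \<Rightarrow> nat" where
  "ell V E = (\<Sum>C\<in>components V E. lip C E)"

definition clique :: "'a set \<Rightarrow> ('a \<Rightarrow> 'a \<Rightarrow> bool) \<Rightarrow> 'a set \<Rightarrow> bool" where
  "clique V E K \<longleftrightarrow> K \<subseteq> V \<and> (\<forall>x\<in>K. \<forall>y\<in>K. x \<noteq> y \<longrightarrow> E x y)"

definition maximal_clique :: "'a set \<Rightarrow> ('a \<Rightarrow> 'a \<Rightarrow> bool) \<Rightarrow> 'a set \<Rightarrow> bool" where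
  "maximal_clique V E K \<longleftrightarrow> clique V E K \<and> (\<forall>K'. clique V E K' \<longrightarrow> K \<subseteq> K' \<longrightarrow> K' = K)"

definition num_max_cliques :: "'a set \<Rightarrow> ('a \<Rightarrow> 'a \<Rightarrow> bool) \<Rightarrow> nat" where
  "num_max_cliques V E = card {K. maximal_clique V E K}"

definition graph_iso :: "'a set \<Rightarrow> ('a \<Rightarrow> 'a \<Rightarrow> bool) \<Rightarrow> 'b set \<Rightarrow> ('b \<Rightarrow> 'b \<Rightarrow> bool) \<Rightarrow> bool" where
  "graph_iso V E W F \<longleftrightarrow> (\<exists>f. bij_betw f V W \<and> (\<forall>x\<in>V. \<forall>y\<in>V. E x y \<longleftrightarrow> F (f x) (f y)))"

definition inter_adj :: "('i \<Rightarrow> real set) \<Rightarrow> 'i \<Rightarrow> 'i \<Rightarrow> bool" where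
  "inter_adj S i j \<longleftrightarrow> i \<noteq> j \<and> S i \<inter> S j \<noteq> {}"

definition Jset :: "nat \<Rightarrow> real set" where
  "Jset j = (if j = 0 then {0} else {real j - 1 .. real j})"

text \<open>Condition (ii) for a single set I with parameter l.\<close>
definition CL_interval_union :: "nat \<Rightarrow> real set \<Rightarrow> bool" where
  "CL_interval_union l I \<longleftrightarrow>
     (\<exists>t::nat. \<exists>a::nat \<Rightarrow> nat. \<exists>b::nat \<Rightarrow> real. t \<ge> 1 \<and>
        I = (\<Union>k\<in>{1..t}. {real (a k) .. b k}) \<and>
        (\<forall>k\<in>{1..t}. real (a k) < b k) \<and>
        (\<forall>k\<in>{1..<t}. b k < real (a (k+1)) \<and> real (a (k+1)) - b k > 2) \<and>
        b t < real l)"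

text \<open>Conditions (ii)-(iv) for I_1..I_r (given as I :: nat => real set on {1..r}).\<close>
definition CL_data :: "nat \<Rightarrow> nat \<Rightarrow> (nat \<Rightarrow> real set) \<Rightarrow> bool" where
  "CL_data l r I \<longleftrightarrow> l \<ge> 1 \<and>
     (\<forall>i\<in>{1..r}. CL_interval_union l (I i)) \<and>
     (\<forall>T. T \<subseteq> {1..r} \<longrightarrow> (\<forall>p\<in>T. \<forall>q\<in>T. I p \<inter> I q \<noteq> {}) \<longrightarrow> \<Inter>(I ` T) \<noteq> {}) \<and>
     (\<forall>p\<in>{1..r}. \<forall>q\<in>{1..r}. I p \<inter> I q \<noteq> {} \<longrightarrow>
        (\<forall>j::nat. real j \<in> I p \<and> real j \<notin> I q \<longrightarrow>
           (real j + 1 \<notin> I p \<longrightarrow> real j + 1 \<notin> I q) \<and>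
           (real j - 1 \<notin> I p \<longrightarrow> real j - 1 \<notin> I q)))"

text \<open>Vertices: Inl j stands for J_j (0 \<le> j \<le> l), Inr i for I_i (1 \<le> i \<le> r).\<close>
definition CL_vertices :: "nat \<Rightarrow> nat \<Rightarrow> (nat + nat) set" where
  "CL_vertices l r = Inl ` {0..l} \<union> Inr ` {1..r}"

definition CL_sets :: "(nat \<Rightarrow> real set) \<Rightarrow> nat + nat \<Rightarrow> real set" where
  "CL_sets I v = (case v of Inl j \<Rightarrow> Jset j | Inr i \<Rightarrow> I i)"

definition connected_CL_graph :: "'a set \<Rightarrow> ('a \<Rightarrow> 'a \<Rightarrow> bool) \<Rightarrow> bool" where
  "connected_CL_graph V E \<longleftrightarrow>
     (\<exists>l r I. CL_data l r I \<and> graph_iso V E (CL_vertices l r) (inter_adj (CL_sets I)))"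

definition CL_graph :: "'a set \<Rightarrow> ('a \<Rightarrow> 'a \<Rightarrow> bool) \<Rightarrow> bool" where
  "CL_graph V E \<longleftrightarrow> (\<forall>C\<in>components V E. connected_CL_graph C E)"

end

theory Submission
  imports Defs
begin

text \<open>Choose a longest induced path v_0 \<dots> v_l and, for each of its edges v_p v_(p+1), a
  maximal clique Q_p containing it. A clique contains at most two vertices of an induced
  path, and only consecutive ones, so the Q_p are distinct and \<open>\<ell> \<le> c\<close> for every graph;
  since both sides add up over components, \<open>\<ell>(G) = c(G)\<close> holds iff it holds for each
  component.

  In a CL-graph the path J_0 \<dots> J_l shows \<open>\<ell> \<ge> l\<close>. Conversely every clique has a common
  integer point p < l: for cliques of I's by the Helly condition (iii) and integrality of
  the left endpoints, for cliques through two consecutive J's because the gaps in (ii)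
  exceed 2, and for cliques through a single J_j by condition (iv). So each maximal clique
  consists of all sets containing some p < l, and \<open>c \<le> l\<close>.

  If \<open>\<ell> = c\<close>, then Q_0, \<dots>, Q_(l-1) are all the maximal cliques. A vertex x off the path
  is adjacent to v_j iff j or j - 1 lies in P(x) = {p. x \<in> Q_p}, two such vertices are
  adjacent iff their sets P meet, and every clique lies in some Q_p. Representing x by a
  thickening of P(x) to a union of intervals, and v_j by J_j, yields a CL-representation.\<close>

section \<open>Longest induced paths and maximal cliques\<close>

lemma induced_path_singleton: "v \<in> V \<Longrightarrow> induced_path V E [v]"
  by (simp add: induced_path_def)

lemma induced_path_adj_iff:
  assumes "symp_on V E" "induced_path V E xs" "i < length xs" "j < length xs" "i \<noteq> j"
  shows "E (xs ! i) (xs ! j) \<longleftrightarrow> j = Suc i \<or> i = Suc j"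
proof -
  have in_V: "xs ! i \<in> V" "xs ! j \<in> V"
    using assms(2-4) by (auto simp: induced_path_def)
  have "E (xs ! i) (xs ! j) \<longleftrightarrow> E (xs ! j) (xs ! i)"
    using symp_onD[OF assms(1)] in_V by blast
  then show ?thesis
    using assms(2-5) unfolding induced_path_def by (cases "i < j") auto
qed

lemma finite_induced_path_lengths:
  assumes "finite V"
  shows "finite {length xs - 1 | xs. induced_path V E xs}"
proof -
  have "length xs \<le> card V" if "induced_path V E xs" for xs
  proof -
    have "distinct xs" "set xs \<subseteq> V" using that by (auto simp: induced_path_def)
    then show ?thesis using card_mono[OF assms] distinct_card by metis
  qed
  then have "{length xs - 1 | xs. induced_path V E xs} \<subseteq> {..card V}"
    by (auto intro: le_trans[OF diff_le_self])
  then show ?thesis using finite_subset by blast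
qed

lemma induced_path_length_le_lip:
  assumes "finite V" "induced_path V E xs"
  shows "length xs - 1 \<le> lip V E"
proof -
  have "length xs - 1 \<in> {length xs - 1 | xs. induced_path V E xs}"
    using assms(2) by blast
  then show ?thesis
    unfolding lip_def using Max_ge[OF finite_induced_path_lengths[OF assms(1)]] by blast
qed

lemma longest_induced_path_exists:
  assumes "finite V" "V \<noteq> {}"
  obtains xs where "induced_path V E xs" "length xs - 1 = lip V E"
proof -
  let ?L = "{length xs - 1 | xs. induced_path V E xs}"
  obtain v where "v \<in> V" using assms(2) by blast
  then have "induced_path V E [v]" by (rule induced_path_singleton)
  then have "?L \<noteq> {}" by blast
  with finite_induced_path_lengths[OF assms(1)] have "lip V E \<in> ?L"
    unfolding lip_def by (rule Max_in)
  then show ?thesis using that by auto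
qed

lemma finite_cliques: "finite V \<Longrightarrow> finite {K. clique V E K}"
  by (rule finite_subset[of _ "Pow V"]) (auto simp: clique_def)

lemma finite_maximal_cliques: "finite V \<Longrightarrow> finite {K. maximal_clique V E K}"
  by (rule finite_subset[OF _ finite_cliques]) (auto simp: maximal_clique_def)

lemma clique_subset_maximal_clique:
  assumes "finite V" "clique V E K"
  obtains K' where "maximal_clique V E K'" "K \<subseteq> K'"
proof -
  obtain M where "clique V E M" "K \<subseteq> M" "\<forall>K'. clique V E K' \<longrightarrow> M \<subseteq> K' \<longrightarrow> M = K'"
    using finite_has_maximal2[OF finite_cliques[of V E, OF assms(1)], of K] assms(2) by auto
  then show ?thesis by (intro that[of M]) (auto simp: maximal_clique_def)
qed

lemma maximal_clique_nonempty:
  assumes "V \<noteq> {}" "maximal_clique V E K"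
  shows "K \<noteq> {}"
proof
  assume "K = {}"
  obtain v where "v \<in> V" using assms(1) by blast
  then have "clique V E {v}" by (simp add: clique_def)
  then show False using assms(2) \<open>K = {}\<close> unfolding maximal_clique_def by blast
qed

definition edge_clique :: "'a set \<Rightarrow> ('a \<Rightarrow> 'a \<Rightarrow> bool) \<Rightarrow> 'a list \<Rightarrow> nat \<Rightarrow> 'a set" where
  "edge_clique V E xs p = (SOME K. maximal_clique V E K \<and> {xs ! p, xs ! Suc p} \<subseteq> K)"

lemma edge_clique_spec:
  assumes "finite V" "symp_on V E" "induced_path V E xs" "Suc p < length xs"
  shows "maximal_clique V E (edge_clique V E xs p)"
    and "xs ! p \<in> edge_clique V E xs p" "xs ! Suc p \<in> edge_clique V E xs p"
proof -
  have "E (xs ! p) (xs ! Suc p)"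
    using induced_path_adj_iff[OF assms(2,3)] assms(4) by simp
  moreover have "xs ! p \<in> V" "xs ! Suc p \<in> V"
    using assms(3,4) by (auto simp: induced_path_def)
  ultimately have "clique V E {xs ! p, xs ! Suc p}"
    using symp_onD[OF assms(2)] by (auto simp: clique_def)
  then have "\<exists>K. maximal_clique V E K \<and> {xs ! p, xs ! Suc p} \<subseteq> K"
    using clique_subset_maximal_clique[OF assms(1)] by metis
  from someI_ex[OF this]
  show "maximal_clique V E (edge_clique V E xs p)"
    "xs ! p \<in> edge_clique V E xs p" "xs ! Suc p \<in> edge_clique V E xs p"
    unfolding edge_clique_def by auto
qed

lemma nth_in_edge_clique_iff:
  assumes "finite V" "symp_on V E" "induced_path V E xs" "Suc p < length xs" "j < length xs"
  shows "xs ! j \<in> edge_clique V E xs p \<longleftrightarrow> j = p \<or> j = Suc p"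
proof
  assume j_in: "xs ! j \<in> edge_clique V E xs p"
  show "j = p \<or> j = Suc p"
  proof (rule ccontr)
    assume j_ne: "\<not> (j = p \<or> j = Suc p)"
    have "distinct xs" using assms(3) by (simp add: induced_path_def)
    then have "xs ! j \<noteq> xs ! p" "xs ! j \<noteq> xs ! Suc p"
      using j_ne assms(4,5) by (auto simp: nth_eq_iff_index_eq)
    then have "E (xs ! j) (xs ! p)" "E (xs ! j) (xs ! Suc p)"
      using edge_clique_spec[OF assms(1-4)] j_in unfolding maximal_clique_def clique_def by auto
    then show False
      using induced_path_adj_iff[OF assms(2,3)] assms(4,5) j_ne by force
  qed
qed (use edge_clique_spec[OF assms(1-4)] in auto)

lemma inj_on_edge_clique:
  assumes "finite V" "symp_on V E" "induced_path V E xs"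
  shows "inj_on (edge_clique V E xs) {..<length xs - 1}"
proof (rule inj_onI)
  fix p q
  assume p: "p \<in> {..<length xs - 1}" and q: "q \<in> {..<length xs - 1}"
    and eq: "edge_clique V E xs p = edge_clique V E xs q"
  have "xs ! p \<in> edge_clique V E xs q" "xs ! Suc p \<in> edge_clique V E xs q"
    using edge_clique_spec[OF assms, of p] p eq by auto
  then show "p = q"
    using nth_in_edge_clique_iff[OF assms, of q] p q by auto
qed

lemma edge_cliques_subset_maximal_cliques:
  assumes "finite V" "symp_on V E" "induced_path V E xs"
  shows "edge_clique V E xs ` {..<length xs - 1} \<subseteq> {K. maximal_clique V E K}"
  using edge_clique_spec(1)[OF assms] by auto

lemma card_edge_cliques:
  assumes "finite V" "symp_on V E" "induced_path V E xs"
  shows "card (edge_clique V E xs ` {..<length xs - 1}) = length xs - 1"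
  using card_image[OF inj_on_edge_clique[OF assms]] by simp

lemma lip_le_num_max_cliques:
  assumes "finite V" "V \<noteq> {}" "symp_on V E"
  shows "lip V E \<le> num_max_cliques V E"
proof -
  obtain xs where xs: "induced_path V E xs" "length xs - 1 = lip V E"
    using longest_induced_path_exists[OF assms(1,2)] .
  have "length xs - 1 \<le> card {K. maximal_clique V E K}"
    using card_mono[OF finite_maximal_cliques[OF assms(1)]
        edge_cliques_subset_maximal_cliques[OF assms(1,3) xs(1)]]
    unfolding card_edge_cliques[OF assms(1,3) xs(1)] .
  then show ?thesis using xs(2) by (simp add: num_max_cliques_def)
qed

section \<open>Invariance under isomorphism\<close>

lemma graph_iso_inv:
  assumes "bij_betw f V W" "\<forall>x\<in>V. \<forall>y\<in>V. E x y \<longleftrightarrow> F (f x) (f y)"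
  shows "bij_betw (inv_into V f) W V"
    and "\<forall>x\<in>W. \<forall>y\<in>W. F x y \<longleftrightarrow> E (inv_into V f x) (inv_into V f y)"
proof -
  show inv: "bij_betw (inv_into V f) W V" using bij_betw_inv_into[OF assms(1)] .
  show "\<forall>x\<in>W. \<forall>y\<in>W. F x y \<longleftrightarrow> E (inv_into V f x) (inv_into V f y)"
  proof (intro ballI)
    fix x y assume "x \<in> W" "y \<in> W"
    then have "inv_into V f x \<in> V" "inv_into V f y \<in> V"
      using bij_betw_apply[OF inv] by blast+
    then have "E (inv_into V f x) (inv_into V f y) \<longleftrightarrow>
        F (f (inv_into V f x)) (f (inv_into V f y))"
      using assms(2) by blast
    also have "\<dots> \<longleftrightarrow> F x y"
      using bij_betw_inv_into_right[OF assms(1)] \<open>x \<in> W\<close> \<open>y \<in> W\<close> by simp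
    finally show "F x y \<longleftrightarrow> E (inv_into V f x) (inv_into V f y)" by simp
  qed
qed

lemma graph_iso_sym:
  assumes "graph_iso V E W F"
  shows "graph_iso W F V E"
proof -
  obtain f where "bij_betw f V W" "\<forall>x\<in>V. \<forall>y\<in>V. E x y \<longleftrightarrow> F (f x) (f y)"
    using assms unfolding graph_iso_def by blast
  from graph_iso_inv[OF this] show ?thesis unfolding graph_iso_def by blast
qed

lemma induced_path_map:
  assumes "bij_betw f V W" "\<forall>x\<in>V. \<forall>y\<in>V. E x y \<longleftrightarrow> F (f x) (f y)" "induced_path V E xs"
  shows "induced_path W F (map f xs)"
proof -
  have xs_V: "set xs \<subseteq> V" using assms(3) by (simp add: induced_path_def)
  then have "inj_on f (set xs)" using assms(1) by (meson bij_betw_def inj_on_subset)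
  moreover have "F (f (xs ! i)) (f (xs ! j)) \<longleftrightarrow> E (xs ! i) (xs ! j)"
    if "i < length xs" "j < length xs" for i j
  proof -
    have "xs ! i \<in> V" "xs ! j \<in> V" using that xs_V nth_mem by blast+
    then show ?thesis using assms(2) by blast
  qed
  ultimately show ?thesis
    using assms(3) xs_V bij_betw_apply[OF assms(1)]
    by (auto simp: induced_path_def distinct_map)
qed

lemma induced_path_lengths_graph_iso:
  assumes "graph_iso V E W F"
  shows "{length xs - 1 | xs. induced_path V E xs} \<subseteq> {length ys - 1 | ys. induced_path W F ys}"
proof
  fix n assume "n \<in> {length xs - 1 | xs. induced_path V E xs}"
  then obtain xs where xs: "n = length xs - 1" "induced_path V E xs" by blast
  obtain f where "bij_betw f V W" "\<forall>x\<in>V. \<forall>y\<in>V. E x y \<longleftrightarrow> F (f x) (f y)"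
    using assms unfolding graph_iso_def by blast
  then have "induced_path W F (map f xs)" using induced_path_map xs(2) by blast
  then have "length (map f xs) - 1 \<in> {length ys - 1 | ys. induced_path W F ys}" by blast
  then show "n \<in> {length ys - 1 | ys. induced_path W F ys}" using xs(1) by simp
qed

lemma lip_graph_iso:
  assumes "graph_iso V E W F"
  shows "lip V E = lip W F"
proof -
  have "{length xs - 1 | xs. induced_path V E xs} = {length ys - 1 | ys. induced_path W F ys}"
    using induced_path_lengths_graph_iso[OF assms]
      induced_path_lengths_graph_iso[OF graph_iso_sym[OF assms]] by (rule subset_antisym)
  then show ?thesis unfolding lip_def by simp
qed

lemma clique_image_iff:
  assumes "bij_betw f V W" "\<forall>x\<in>V. \<forall>y\<in>V. E x y \<longleftrightarrow> F (f x) (f y)" "K \<subseteq> V"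
  shows "clique W F (f ` K) \<longleftrightarrow> clique V E K"
proof -
  have inj: "inj_on f V" using assms(1) by (rule bij_betw_imp_inj_on)
  have "f ` K \<subseteq> W" using assms(1,3) bij_betw_imp_surj_on by blast
  moreover have "f x \<noteq> f y \<longleftrightarrow> x \<noteq> y" if "x \<in> K" "y \<in> K" for x y
    using inj assms(3) that by (auto dest: inj_onD)
  moreover have "F (f x) (f y) \<longleftrightarrow> E x y" if "x \<in> K" "y \<in> K" for x y
    using assms(2,3) that by blast
  ultimately show ?thesis using assms(3) unfolding clique_def by auto
qed

lemma maximal_clique_image:
  assumes "bij_betw f V W" "\<forall>x\<in>V. \<forall>y\<in>V. E x y \<longleftrightarrow> F (f x) (f y)"
    and "maximal_clique V E K"
  shows "maximal_clique W F (f ` K)"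
proof -
  let ?g = "inv_into V f"
  note inv = graph_iso_inv[OF assms(1,2)]
  have K: "clique V E K" "K \<subseteq> V"
    using assms(3) by (auto simp: maximal_clique_def clique_def)
  have "K' = f ` K" if "clique W F K'" "f ` K \<subseteq> K'" for K'
  proof -
    have K'_W: "K' \<subseteq> W" using that(1) by (simp add: clique_def)
    have f_g: "f ` ?g ` K' = K'"
      using image_inv_into_cancel[OF bij_betw_imp_surj_on[OF assms(1)] K'_W] .
    have "clique V E (?g ` K')" using clique_image_iff[OF inv K'_W] that(1) by blast
    moreover have "K \<subseteq> ?g ` K'"
      using image_mono[OF that(2), of ?g]
        inv_into_image_cancel[OF bij_betw_imp_inj_on[OF assms(1)] K(2)]
      by simp
    ultimately have "?g ` K' = K" using assms(3) unfolding maximal_clique_def by blast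
    then show ?thesis using f_g by simp
  qed
  then show ?thesis
    using clique_image_iff[OF assms(1,2) K(2)] K(1) unfolding maximal_clique_def by blast
qed

lemma num_max_cliques_graph_iso:
  assumes "graph_iso V E W F"
  shows "num_max_cliques V E = num_max_cliques W F"
proof -
  obtain f where f: "bij_betw f V W" "\<forall>x\<in>V. \<forall>y\<in>V. E x y \<longleftrightarrow> F (f x) (f y)"
    using assms unfolding graph_iso_def by blast
  let ?g = "inv_into V f"
  note g = graph_iso_inv[OF f]
  have sub: "K \<subseteq> V" if "maximal_clique V E K" for K
    using that by (simp add: maximal_clique_def clique_def)
  have sub': "K \<subseteq> W" if "maximal_clique W F K" for K
    using that by (simp add: maximal_clique_def clique_def)
  have "bij_betw (image f) {K. maximal_clique V E K} {K. maximal_clique W F K}"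
  proof (rule bij_betw_byWitness[where f' = "image ?g"])
    show "\<forall>K\<in>{K. maximal_clique V E K}. ?g ` f ` K = K"
      using inv_into_image_cancel[OF bij_betw_imp_inj_on[OF f(1)]] sub by blast
    show "\<forall>K\<in>{K. maximal_clique W F K}. f ` ?g ` K = K"
      using image_inv_into_cancel[OF bij_betw_imp_surj_on[OF f(1)]] sub' by blast
    show "image f ` {K. maximal_clique V E K} \<subseteq> {K. maximal_clique W F K}"
      using maximal_clique_image[OF f] by blast
    show "image ?g ` {K. maximal_clique W F K} \<subseteq> {K. maximal_clique V E K}"
      using maximal_clique_image[OF g] by blast
  qed
  then show ?thesis unfolding num_max_cliques_def by (rule bij_betw_same_card)
qed

section \<open>Connected components\<close>

lemma reach_sym:
  assumes "symp_on V E" "reach V E u v"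
  shows "reach V E v u"
proof -
  have "symp (\<lambda>x y. x \<in> V \<and> y \<in> V \<and> E x y)"
    using assms(1) by (auto simp: symp_on_def symp_def)
  then show ?thesis using assms(2) unfolding reach_def by (meson sympD symp_rtranclp)
qed

lemma component_eq:
  assumes "symp_on V E" "u \<in> component V E v"
  shows "component V E u = component V E v"
proof -
  have "reach V E v u" using assms(2) by (simp add: component_def)
  moreover have "reach V E u v" using reach_sym[OF assms(1) calculation] .
  ultimately show ?thesis
    unfolding component_def reach_def by (auto intro: rtranclp_trans)
qed

lemma components_disjoint:
  assumes "symp_on V E" "C \<in> components V E" "C' \<in> components V E" "x \<in> C" "x \<in> C'"
  shows "C = C'"
proof -
  obtain v v' where "C = component V E v" "C' = component V E v'"
    using assms(2,3) by (auto simp: components_def)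
  then show ?thesis using component_eq[OF assms(1)] assms(4,5) by metis
qed

lemma component_subset: "C \<in> components V E \<Longrightarrow> C \<subseteq> V"
  by (auto simp: components_def component_def)

lemma component_nonempty: "C \<in> components V E \<Longrightarrow> C \<noteq> {}"
  by (auto simp: components_def component_def reach_def)

lemma component_edge_closed:
  assumes "C \<in> components V E" "x \<in> C" "y \<in> V" "E x y"
  shows "y \<in> C"
proof -
  obtain v where C: "C = component V E v" using assms(1) by (auto simp: components_def)
  then have "reach V E v x" "x \<in> V" using assms(2) by (auto simp: component_def)
  then have "reach V E v y"
    unfolding reach_def using assms(3,4) by (simp add: rtranclp.rtrancl_into_rtrancl)
  then show ?thesis using C assms(3) by (simp add: component_def)
qed

lemma clique_subset_component:
  assumes "C \<in> components V E" "clique V E K" "x \<in> K" "x \<in> C"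
  shows "K \<subseteq> C"
proof
  fix y assume "y \<in> K"
  show "y \<in> C"
  proof (cases "y = x")
    case False
    then have "E x y" "y \<in> V" using assms(2,3) \<open>y \<in> K\<close> by (auto simp: clique_def)
    then show ?thesis using component_edge_closed[OF assms(1,4)] by blast
  qed (use assms(4) in simp)
qed

lemma clique_subset_iff: "C \<subseteq> V \<Longrightarrow> clique C E K \<longleftrightarrow> clique V E K \<and> K \<subseteq> C"
  by (auto simp: clique_def)

lemma maximal_clique_component_iff:
  assumes "C \<in> components V E"
  shows "maximal_clique C E K \<longleftrightarrow> maximal_clique V E K \<and> K \<subseteq> C"
proof
  assume max_C: "maximal_clique C E K"
  then have K: "clique V E K" "K \<subseteq> C"
    using clique_subset_iff[OF component_subset[OF assms]] by (auto simp: maximal_clique_def)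
  moreover have "K \<noteq> {}" using maximal_clique_nonempty[OF component_nonempty[OF assms] max_C] .
  ultimately obtain x where "x \<in> K" "x \<in> C" by blast
  have "K' = K" if "clique V E K'" "K \<subseteq> K'" for K'
  proof -
    have "K' \<subseteq> C" using clique_subset_component[OF assms that(1) _ \<open>x \<in> C\<close>] that(2) \<open>x \<in> K\<close> by blast
    then have "clique C E K'"
      using clique_subset_iff[OF component_subset[OF assms]] that(1) by blast
    then show ?thesis using max_C that(2) by (simp add: maximal_clique_def)
  qed
  then show "maximal_clique V E K \<and> K \<subseteq> C" using K by (simp add: maximal_clique_def)
next
  assume "maximal_clique V E K \<and> K \<subseteq> C"
  then show "maximal_clique C E K"
    using clique_subset_iff[OF component_subset[OF assms]] by (simp add: maximal_clique_def)
qed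

lemma maximal_cliques_eq_UN_components:
  assumes "V \<noteq> {}"
  shows "{K. maximal_clique V E K} = (\<Union>C\<in>components V E. {K. maximal_clique C E K})"
proof (intro equalityI subsetI)
  fix K assume "K \<in> {K. maximal_clique V E K}"
  then have max_V: "maximal_clique V E K" by simp
  have "K \<noteq> {}" using maximal_clique_nonempty[OF assms max_V] .
  moreover have "K \<subseteq> V" using max_V by (simp add: maximal_clique_def clique_def)
  ultimately obtain x where "x \<in> K" "x \<in> V" by blast
  then have C: "component V E x \<in> components V E" and "x \<in> component V E x"
    by (auto simp: components_def component_def reach_def)
  then have "K \<subseteq> component V E x"
    using clique_subset_component[OF C _ \<open>x \<in> K\<close>] max_V by (simp add: maximal_clique_def)
  then have "maximal_clique (component V E x) E K"
    using maximal_clique_component_iff[OF C] max_V by simp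
  then show "K \<in> (\<Union>C\<in>components V E. {K. maximal_clique C E K})" using C by blast
next
  fix K assume "K \<in> (\<Union>C\<in>components V E. {K. maximal_clique C E K})"
  then show "K \<in> {K. maximal_clique V E K}" using maximal_clique_component_iff by blast
qed

lemma num_max_cliques_components:
  assumes "finite V" "V \<noteq> {}" "symp_on V E"
  shows "num_max_cliques V E = (\<Sum>C\<in>components V E. num_max_cliques C E)"
  unfolding num_max_cliques_def maximal_cliques_eq_UN_components[OF assms(2)]
proof (rule card_UN_disjoint)
  show "finite (components V E)" using assms(1) by (simp add: components_def)
  show "\<forall>C\<in>components V E. finite {K. maximal_clique C E K}"
  proof
    fix C assume "C \<in> components V E"
    then have "finite C" using finite_subset[OF component_subset assms(1)] by blast
    then show "finite {K. maximal_clique C E K}" by (rule finite_maximal_cliques)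
  qed
  show "\<forall>C\<in>components V E. \<forall>C'\<in>components V E. C \<noteq> C' \<longrightarrow>
      {K. maximal_clique C E K} \<inter> {K. maximal_clique C' E K} = {}"
  proof (intro ballI impI)
    fix C C' assume C: "C \<in> components V E" and C': "C' \<in> components V E" and "C \<noteq> C'"
    have False if "maximal_clique C E K" "maximal_clique C' E K" for K
    proof -
      have K: "maximal_clique V E K" "K \<subseteq> C" "K \<subseteq> C'"
        using that maximal_clique_component_iff[OF C] maximal_clique_component_iff[OF C']
        by simp_all
      obtain x where "x \<in> K" using maximal_clique_nonempty[OF assms(2) K(1)] by blast
      then show False using components_disjoint[OF assms(3) C C'] \<open>C \<noteq> C'\<close> K(2,3) by blast
    qed
    then show "{K. maximal_clique C E K} \<inter> {K. maximal_clique C' E K} = {}" by blast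
  qed
qed

lemma ell_eq_num_max_cliques_iff:
  assumes "finite V" "V \<noteq> {}" "symp_on V E"
  shows "ell V E = num_max_cliques V E \<longleftrightarrow>
    (\<forall>C\<in>components V E. lip C E = num_max_cliques C E)"
proof -
  have "lip C E \<le> num_max_cliques C E" if "C \<in> components V E" for C
    using lip_le_num_max_cliques finite_subset[OF component_subset[OF that] assms(1)]
      component_nonempty[OF that] symp_on_subset[OF assms(3) component_subset[OF that]] by blast
  moreover have "finite (components V E)" using assms(1) by (simp add: components_def)
  ultimately show ?thesis
    unfolding ell_def num_max_cliques_components[OF assms]
    using sum_mono_inv[where f = "\<lambda>C. lip C E" and g = "\<lambda>C. num_max_cliques C E"]
      sum.cong[OF refl, of "components V E" "\<lambda>C. lip C E" "\<lambda>C. num_max_cliques C E"]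
    by blast
qed

section \<open>Interval models of sets of natural numbers\<close>

lemma of_nat_in_Jset: "real j \<in> Jset j"
  by (simp add: Jset_def)

lemma of_nat_minus_one_in_Jset: "0 < j \<Longrightarrow> real j - 1 \<in> Jset j"
  by (simp add: Jset_def)

lemma Jset_bounds: "y \<in> Jset j \<Longrightarrow> real j - 1 \<le> y \<and> y \<le> real j \<and> (j = 0 \<longrightarrow> y = 0)"
  by (auto simp: Jset_def split: if_splits)

lemma Jset_Int_Jset_iff: "Jset i \<inter> Jset j \<noteq> {} \<longleftrightarrow> i = j \<or> i = Suc j \<or> j = Suc i"
proof
  assume "Jset i \<inter> Jset j \<noteq> {}"
  then obtain y where "y \<in> Jset i" "y \<in> Jset j" by blast
  then have "real i - 1 \<le> y" "y \<le> real i" "real j - 1 \<le> y" "y \<le> real j"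
    using Jset_bounds by blast+
  then show "i = j \<or> i = Suc j \<or> j = Suc i" by linarith
next
  assume "i = j \<or> i = Suc j \<or> j = Suc i"
  then show "Jset i \<inter> Jset j \<noteq> {}"
    using of_nat_in_Jset of_nat_minus_one_in_Jset[of "Suc i"] of_nat_minus_one_in_Jset[of "Suc j"]
    by auto
qed

text \<open>Interval model of a set P of edge indices: [p, p + 1/2] for each p \<in> P, and
  [p, p + 1] whenever p and p + 1 are both in P. The tails of length 1/2 make two models
  meet exactly when the index sets do, while keeping p + 1 out of the model of P unless
  p + 1 \<in> P.\<close>

definition thicken :: "nat set \<Rightarrow> real set" where
  "thicken P = (\<Union>p\<in>P. {real p..real p + 1/2}) \<union> (\<Union>p\<in>{p \<in> P. Suc p \<in> P}. {real p..real p + 1})"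

lemma thicken_memE:
  assumes "y \<in> thicken P"
  obtains p where "p \<in> P" "real p \<le> y" "y \<le> real p + 1" "real p + 1/2 < y \<longrightarrow> Suc p \<in> P"
proof -
  consider (tail) p where "p \<in> P" "real p \<le> y" "y \<le> real p + 1/2"
    | (link) p where "p \<in> P" "Suc p \<in> P" "real p \<le> y" "y \<le> real p + 1"
    using assms unfolding thicken_def Un_iff UN_iff atLeastAtMost_iff mem_Collect_eq by blast
  then show ?thesis
  proof cases
    case tail
    then show ?thesis by (intro that[of p]) auto
  next
    case link
    then show ?thesis by (intro that[of p]) auto
  qed
qed

lemma thicken_nonneg: "y \<in> thicken P \<Longrightarrow> 0 \<le> y"
  by (erule thicken_memE) simp

lemma of_nat_in_thicken_iff: "real j \<in> thicken P \<longleftrightarrow> j \<in> P"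
proof
  assume "real j \<in> thicken P"
  then obtain p where "p \<in> P" "real p \<le> real j" "real j \<le> real p + 1"
    "real p + 1/2 < real j \<longrightarrow> Suc p \<in> P"
    by (rule thicken_memE)
  moreover have "j = p \<or> j = Suc p" using calculation(2,3) by linarith
  ultimately show "j \<in> P" by fastforce
qed (auto simp: thicken_def)

lemma thicken_Int_thicken_iff: "thicken P \<inter> thicken Q \<noteq> {} \<longleftrightarrow> P \<inter> Q \<noteq> {}"
proof
  assume "thicken P \<inter> thicken Q \<noteq> {}"
  then obtain y where y: "y \<in> thicken P" "y \<in> thicken Q" by blast
  obtain p where p: "p \<in> P" "real p \<le> y" "y \<le> real p + 1" "real p + 1/2 < y \<longrightarrow> Suc p \<in> P"
    using y(1) by (rule thicken_memE)
  obtain q where q: "q \<in> Q" "real q \<le> y" "y \<le> real q + 1" "real q + 1/2 < y \<longrightarrow> Suc q \<in> Q"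
    using y(2) by (rule thicken_memE)
  have "p = q \<or> q = Suc p \<or> p = Suc q" using p(2,3) q(2,3) by linarith
  then show "P \<inter> Q \<noteq> {}"
  proof (elim disjE)
    assume "q = Suc p"
    then have "Suc p \<in> P" using p(4) q(2) by simp
    then show ?thesis using q(1) \<open>q = Suc p\<close> by blast
  next
    assume "p = Suc q"
    then have "Suc q \<in> Q" using q(4) p(2) by simp
    then show ?thesis using p(1) \<open>p = Suc q\<close> by blast
  qed (use p q in blast)
next
  assume "P \<inter> Q \<noteq> {}"
  then show "thicken P \<inter> thicken Q \<noteq> {}" using of_nat_in_thicken_iff by blast
qed

lemma thicken_Int_Jset_iff: "thicken P \<inter> Jset j \<noteq> {} \<longleftrightarrow> j \<in> P \<union> Suc ` P"
proof
  assume "thicken P \<inter> Jset j \<noteq> {}"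
  then obtain y where y_P: "y \<in> thicken P" and "y \<in> Jset j" by blast
  then have y: "real j - 1 \<le> y" "y \<le> real j" "j = 0 \<longrightarrow> y = 0"
    using Jset_bounds by blast+
  from y_P obtain p where p: "p \<in> P" "real p \<le> y" "y \<le> real p + 1" "real p + 1/2 < y \<longrightarrow> Suc p \<in> P"
    by (rule thicken_memE)
  have "p \<le> j" "j \<le> p + 2" using p(2,3) y(1,2) by linarith+
  then have "j = p \<or> j = Suc p \<or> j = Suc (Suc p)" by auto
  moreover have "j = Suc (Suc p) \<longrightarrow> Suc p \<in> P" using p(2,4) y(1) by auto
  ultimately show "j \<in> P \<union> Suc ` P" using p(1) by blast
next
  assume "j \<in> P \<union> Suc ` P"
  then consider "j \<in> P" | p where "p \<in> P" "j = Suc p" by blast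
  then show "thicken P \<inter> Jset j \<noteq> {}"
  proof cases
    case 1
    then show ?thesis using of_nat_in_thicken_iff of_nat_in_Jset by blast
  next
    case 2
    then have "real j - 1 \<in> thicken P" "real j - 1 \<in> Jset j"
      using of_nat_in_thicken_iff[of p] of_nat_minus_one_in_Jset[of j] by simp_all
    then show ?thesis by blast
  qed
qed

lemma thicken_step_condition:
  assumes PQ: "\<And>p. p \<in> P \<Longrightarrow> Suc p \<in> Q \<Longrightarrow> p \<in> Q \<or> Suc p \<in> P"
    and QP: "\<And>p. p \<in> Q \<Longrightarrow> Suc p \<in> P \<Longrightarrow> p \<in> P \<or> Suc p \<in> Q"
    and j: "real j \<in> thicken P" "real j \<notin> thicken Q"
  shows "(real j + 1 \<notin> thicken P \<longrightarrow> real j + 1 \<notin> thicken Q) \<and>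
    (real j - 1 \<notin> thicken P \<longrightarrow> real j - 1 \<notin> thicken Q)"
proof (intro conjI impI)
  have "j \<in> P" "j \<notin> Q" using j by (simp_all add: of_nat_in_thicken_iff)
  show "real j + 1 \<notin> thicken Q" if "real j + 1 \<notin> thicken P"
  proof -
    have "Suc j \<notin> P" using that of_nat_in_thicken_iff[of "Suc j" P] by (simp add: add.commute)
    then have "Suc j \<notin> Q" using PQ[of j] \<open>j \<in> P\<close> \<open>j \<notin> Q\<close> by blast
    then show ?thesis using of_nat_in_thicken_iff[of "Suc j" Q] by (simp add: add.commute)
  qed
  show "real j - 1 \<notin> thicken Q" if "real j - 1 \<notin> thicken P"
  proof (cases j)
    case 0
    then show ?thesis using thicken_nonneg[of "real j - 1" Q] by auto
  next
    case (Suc i)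
    then have "i \<notin> P" using that of_nat_in_thicken_iff[of i P] by simp
    then have "i \<notin> Q" using QP[of i] \<open>j \<in> P\<close> \<open>j \<notin> Q\<close> Suc by blast
    then show ?thesis using of_nat_in_thicken_iff[of i Q] Suc by simp
  qed
qed

lemma thicken_empty [simp]: "thicken {} = {}"
  by (simp add: thicken_def)

lemma thicken_insert_Suc:
  assumes "\<forall>p\<in>P. p \<le> m" "m \<in> P"
  shows "thicken (insert (Suc m) P) = thicken P \<union> {real m..real m + 3/2}"
proof -
  have links: "{p \<in> insert (Suc m) P. Suc p \<in> insert (Suc m) P} = insert m {p \<in> P. Suc p \<in> P}"
    using assms by fastforce
  have "thicken (insert (Suc m) P) =
      thicken P \<union> ({real m..real m + 1} \<union> {real (Suc m)..real (Suc m) + 1/2})"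
    unfolding thicken_def links by auto
  also have "{real m..real m + 1} \<union> {real (Suc m)..real (Suc m) + 1/2} = {real m..real m + 3/2}"
    by auto
  finally show ?thesis .
qed

lemma thicken_insert_isolated:
  assumes "\<forall>p\<in>P. Suc p < m"
  shows "thicken (insert m P) = thicken P \<union> {real m..real m + 1/2}"
proof -
  have links: "{p \<in> insert m P. Suc p \<in> insert m P} = {p \<in> P. Suc p \<in> P}"
    using assms by fastforce
  show ?thesis unfolding thicken_def links by auto
qed

section \<open>Unions of intervals with gaps longer than 2\<close>

definition interval_chain :: "nat \<Rightarrow> (nat \<Rightarrow> nat) \<Rightarrow> (nat \<Rightarrow> real) \<Rightarrow> real set \<Rightarrow> bool" where
  "interval_chain t a b S \<longleftrightarrow> 1 \<le> t \<and> S = (\<Union>k\<in>{1..t}. {real (a k)..b k}) \<and>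
     (\<forall>k\<in>{1..t}. real (a k) < b k) \<and>
     (\<forall>k\<in>{1..<t}. b k < real (a (k + 1)) \<and> real (a (k + 1)) - b k > 2)"

lemma CL_interval_union_iff:
  "CL_interval_union l S \<longleftrightarrow> (\<exists>t a b. interval_chain t a b S \<and> b t < real l)"
  unfolding CL_interval_union_def interval_chain_def by auto

lemma interval_chain_singleton:
  "real m < d \<Longrightarrow> interval_chain 1 (\<lambda>_. m) (\<lambda>_. d) {real m..d}"
  by (simp add: interval_chain_def)

lemma interval_chain_extend_last:
  assumes "interval_chain t a b S" "real (a t) \<le> c" "c \<le> b t" "b t \<le> d"
  shows "interval_chain t a (b(t := d)) (S \<union> {c..d})"
proof -
  have t: "1 \<le> t" "{1..t} = insert t {1..<t}" using assms(1) by (auto simp: interval_chain_def)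
  have "S \<union> {c..d} = {real (a t)..b t} \<union> {c..d} \<union> (\<Union>k\<in>{1..<t}. {real (a k)..b k})"
    using assms(1) t(2) by (auto simp: interval_chain_def)
  also have "{real (a t)..b t} \<union> {c..d} = {real (a t)..d}" using assms(2-4) by auto
  finally show ?thesis using assms(1,4) t by (auto simp: interval_chain_def)
qed

lemma interval_chain_append:
  assumes "interval_chain t a b S" "b t + 2 < real m" "real m < d"
  shows "interval_chain (Suc t) (a(Suc t := m)) (b(Suc t := d)) (S \<union> {real m..d})"
proof -
  have "1 \<le> t" using assms(1) by (simp add: interval_chain_def)
  have "S \<union> {real m..d} = (\<Union>k\<in>{1..Suc t}. {real ((a(Suc t := m)) k)..(b(Suc t := d)) k})"
    using assms(1) by (auto simp: interval_chain_def atLeastAtMostSuc_conv)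
  moreover have "k \<in> {1..<Suc t} \<Longrightarrow> (b(Suc t := d)) k < real ((a(Suc t := m)) (k + 1)) \<and>
      real ((a(Suc t := m)) (k + 1)) - (b(Suc t := d)) k > 2" for k
    using assms(1,2) by (cases "k = t") (auto simp: interval_chain_def)
  ultimately show ?thesis
    using assms(1,3) \<open>1 \<le> t\<close> by (auto simp: interval_chain_def)
qed

definition no_unit_gaps :: "nat set \<Rightarrow> bool" where
  "no_unit_gaps P \<longleftrightarrow> (\<forall>p. p \<in> P \<longrightarrow> Suc (Suc p) \<in> P \<longrightarrow> Suc p \<in> P)"

lemma thicken_insert_interval_chain:
  assumes chain: "interval_chain t a b (thicken P)" and b_t: "b t = real (Max P) + 1/2"
    and "finite P" "P \<noteq> {}" "\<forall>p\<in>P. p < m" "no_unit_gaps (insert m P)"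
  shows "\<exists>t a b. interval_chain t a b (thicken (insert m P)) \<and> b t = real m + 1/2"
proof -
  have Max: "Max P \<in> P" "\<forall>p\<in>P. p \<le> Max P" using assms(3,4) by simp_all
  have "Suc (Suc (Max P)) \<noteq> m"
  proof
    assume "Suc (Suc (Max P)) = m"
    then have "Suc (Max P) \<in> insert m P" using assms(6) Max(1) unfolding no_unit_gaps_def by blast
    then show False using Max(2) \<open>Suc (Suc (Max P)) = m\<close> by fastforce
  qed
  then consider "m = Suc (Max P)" | "Suc (Suc (Max P)) < m" using assms(5) Max(1) by fastforce
  then show ?thesis
  proof cases
    case 1
    have "real (a t) < b t" using chain by (auto simp: interval_chain_def)
    then have "a t \<le> Max P" using b_t by linarith
    moreover have "thicken (insert m P) = thicken P \<union> {real (Max P)..real (Max P) + 3/2}"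
      using thicken_insert_Suc[of P "Max P"] Max 1 by simp
    ultimately have "interval_chain t a (b(t := real m + 1/2)) (thicken (insert m P))"
      using interval_chain_extend_last[OF chain, of "real (Max P)" "real m + 1/2"] b_t 1
      by (simp add: add.commute)
    moreover have "(b(t := real m + 1/2)) t = real m + 1/2" by simp
    ultimately show ?thesis by blast
  next
    case 2
    then have "\<forall>p\<in>P. Suc p < m" using Max(2) by fastforce
    then have "thicken (insert m P) = thicken P \<union> {real m..real m + 1/2}"
      by (rule thicken_insert_isolated)
    moreover have "b t + 2 < real m" using b_t 2 by linarith
    ultimately have "interval_chain (Suc t) (a(Suc t := m)) (b(Suc t := real m + 1/2))
        (thicken (insert m P))"
      using interval_chain_append[OF chain, of m "real m + 1/2"] by simp
    moreover have "(b(Suc t := real m + 1/2)) (Suc t) = real m + 1/2" by simp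
    ultimately show ?thesis by blast
  qed
qed

lemma thicken_interval_chain:
  assumes "finite P" "P \<noteq> {}" "no_unit_gaps P"
  shows "\<exists>t a b. interval_chain t a b (thicken P) \<and> b t = real (Max P) + 1/2"
  using assms
proof (induction P rule: finite_linorder_max_induct)
  case (insert m P)
  have Max_insert: "Max (insert m P) = m"
    using insert.hyps by (cases "P = {}") (simp_all add: Max_insert2 less_imp_le)
  show ?case
  proof (cases "P = {}")
    case True
    have "interval_chain 1 (\<lambda>_. m) (\<lambda>_. real m + 1/2) (thicken (insert m P))"
      using interval_chain_singleton[of m "real m + 1/2"] thicken_insert_isolated[of "{}" m] True
      by simp
    then show ?thesis unfolding Max_insert
      by (intro exI[of _ 1] exI[of _ "\<lambda>_. m"] exI[of _ "\<lambda>_. real m + 1/2"] conjI) simp_all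
  next
    case False
    have "no_unit_gaps P"
      using insert.prems(2) insert.hyps(2) unfolding no_unit_gaps_def by fastforce
    then obtain t a b where "interval_chain t a b (thicken P)" "b t = real (Max P) + 1/2"
      using insert.IH[OF False] by auto
    then show ?thesis unfolding Max_insert
      using thicken_insert_interval_chain insert.hyps(1,2) False insert.prems(2) by blast
  qed
qed simp

lemma thicken_CL_interval_union:
  assumes "finite P" "P \<noteq> {}" "no_unit_gaps P" "\<forall>p\<in>P. p < l"
  shows "CL_interval_union l (thicken P)"
proof -
  obtain t a b where "interval_chain t a b (thicken P)" "b t = real (Max P) + 1/2"
    using thicken_interval_chain[OF assms(1-3)] by blast
  moreover have "Max P < l" using assms(1,2,4) by simp
  ultimately show ?thesis unfolding CL_interval_union_iff by fastforce
qed

lemma interval_chain_right_mono: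
  assumes "interval_chain t a b S" "1 \<le> k" "k \<le> k'" "k' \<le> t"
  shows "b k \<le> b k'"
  using assms(3,4)
proof (induction k' rule: dec_induct)
  case (step k')
  then have "b k' < real (a (Suc k'))" "real (a (Suc k')) < b (Suc k')"
    using assms(1,2) by (auto simp: interval_chain_def)
  then show ?case using step by linarith
qed simp

lemma interval_chain_gap:
  assumes "interval_chain t a b S" "1 \<le> k" "k < k'" "k' \<le> t"
  shows "b k + 2 < real (a k')"
proof -
  have "b k \<le> b (k' - 1)" using interval_chain_right_mono[OF assms(1,2)] assms(3,4) by simp
  moreover have "b (k' - 1) + 2 < real (a k')"
    using assms by (auto simp: interval_chain_def dest!: bspec[of _ _ "k' - 1"])
  ultimately show ?thesis by linarith
qed

lemma interval_chain_memE:
  assumes "interval_chain t a b S" "y \<in> S"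
  obtains k where "k \<in> {1..t}" "real (a k) \<le> y" "y \<le> b k"
  using assms by (auto simp: interval_chain_def)

lemma CL_interval_unionE:
  assumes "CL_interval_union l S"
  obtains t a b where "interval_chain t a b S" "b t < real l"
  using assms unfolding CL_interval_union_iff by blast

lemma CL_interval_union_nonempty:
  assumes "CL_interval_union l S"
  shows "S \<noteq> {}"
proof -
  obtain t a b where "interval_chain t a b S" using assms by (rule CL_interval_unionE)
  then have "real (a 1) \<in> S" by (auto simp: interval_chain_def less_imp_le)
  then show ?thesis by blast
qed

lemma CL_interval_union_bounds:
  assumes "CL_interval_union l S" "y \<in> S"
  shows "0 \<le> y" "y < real l"
proof -
  obtain t a b where chain: "interval_chain t a b S" and "b t < real l"
    using assms(1) by (rule CL_interval_unionE)
  obtain k where "k \<in> {1..t}" "real (a k) \<le> y" "y \<le> b k"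
    using chain assms(2) by (rule interval_chain_memE)
  moreover have "b k \<le> b t" using interval_chain_right_mono[OF chain] calculation(1) by simp
  ultimately show "0 \<le> y" "y < real l" using \<open>b t < real l\<close> by linarith+
qed

lemma CL_interval_union_floor:
  assumes "CL_interval_union l S" "y \<in> S"
  shows "real (nat \<lfloor>y\<rfloor>) \<in> S"
proof -
  obtain t a b where chain: "interval_chain t a b S"
    using assms(1) by (rule CL_interval_unionE)
  obtain k where k: "k \<in> {1..t}" "real (a k) \<le> y" "y \<le> b k"
    using chain assms(2) by (rule interval_chain_memE)
  have "int (a k) \<le> \<lfloor>y\<rfloor>" using k(2) by (simp add: le_floor_iff)
  then have "real (a k) \<le> real (nat \<lfloor>y\<rfloor>)" by linarith
  moreover have "real (nat \<lfloor>y\<rfloor>) \<le> b k" using k(2,3) by linarith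
  ultimately show ?thesis using chain k(1) by (auto simp: interval_chain_def)
qed

text \<open>This is where the gaps of length greater than 2 required in (ii) are used.\<close>

lemma CL_interval_union_segment:
  assumes "CL_interval_union l S" "x \<in> S" "y \<in> S" "x \<le> y" "y \<le> x + 2"
  shows "{x..y} \<subseteq> S"
proof -
  obtain t a b where chain: "interval_chain t a b S"
    using assms(1) by (rule CL_interval_unionE)
  obtain k where k: "k \<in> {1..t}" "real (a k) \<le> x" "x \<le> b k"
    using chain assms(2) by (rule interval_chain_memE)
  obtain k' where k': "k' \<in> {1..t}" "real (a k') \<le> y" "y \<le> b k'"
    using chain assms(3) by (rule interval_chain_memE)
  have "k' = k"
  proof (rule ccontr)
    assume "k' \<noteq> k"
    then consider "k < k'" | "k' < k" by linarith
    then show False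
    proof cases
      case 1
      then show False using interval_chain_gap[OF chain, of k k'] k k' assms(5) by auto
    next
      case 2
      then have "b k' + 2 < real (a k)" using interval_chain_gap[OF chain, of k' k] k k' by auto
      then show False using k k' assms(4) by linarith
    qed
  qed
  then have "{x..y} \<subseteq> {real (a k)..b k}" using k k' by auto
  then show ?thesis using chain k(1) by (auto simp: interval_chain_def)
qed

lemma CL_interval_union_Int_Jset:
  assumes "CL_interval_union l S" "S \<inter> Jset j \<noteq> {}"
  shows "real j \<in> S \<or> (0 < j \<and> real j - 1 \<in> S)"
proof -
  obtain y where y: "y \<in> S" "y \<in> Jset j" using assms(2) by blast
  then have bounds: "real j - 1 \<le> y" "y \<le> real j" "j = 0 \<longrightarrow> y = 0" using Jset_bounds by blast+
  show ?thesis
  proof (cases "y = real j")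
    case True
    then show ?thesis using y(1) by simp
  next
    case False
    then have "0 < j" "\<lfloor>y\<rfloor> = int j - 1" using bounds by (auto simp: floor_eq_iff)
    then have "real (nat \<lfloor>y\<rfloor>) = real j - 1" by simp
    then show ?thesis using CL_interval_union_floor[OF assms(1) y(1)] \<open>0 < j\<close> by simp
  qed
qed

lemma CL_interval_union_Int_Jset_Suc:
  assumes "CL_interval_union l S" "S \<inter> Jset j \<noteq> {}" "S \<inter> Jset (Suc j) \<noteq> {}"
  shows "real j \<in> S"
proof -
  obtain x where x: "x \<in> S" "x \<in> Jset j" using assms(2) by blast
  obtain y where y: "y \<in> S" "y \<in> Jset (Suc j)" using assms(3) by blast
  have "real j - 1 \<le> x" "x \<le> real j" "real j \<le> y" "y \<le> real j + 1"
    using Jset_bounds[OF x(2)] Jset_bounds[OF y(2)] by auto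
  then show ?thesis using CL_interval_union_segment[OF assms(1) x(1) y(1)] by auto
qed

section \<open>CL-graphs satisfy \<open>\<ell> = c\<close>\<close>

lemma CL_sets_simps [simp]: "CL_sets I (Inl j) = Jset j" "CL_sets I (Inr i) = I i"
  by (simp_all add: CL_sets_def)

lemma CL_vertices_iff [simp]:
  "Inl j \<in> CL_vertices l r \<longleftrightarrow> j \<le> l" "Inr i \<in> CL_vertices l r \<longleftrightarrow> i \<in> {1..r}"
  by (auto simp: CL_vertices_def)

lemma CL_dataI:
  assumes "1 \<le> l" "\<And>i. i \<in> {1..r} \<Longrightarrow> CL_interval_union l (I i)"
    and "\<And>T. T \<subseteq> {1..r} \<Longrightarrow> \<forall>p\<in>T. \<forall>q\<in>T. I p \<inter> I q \<noteq> {} \<Longrightarrow> \<Inter>(I ` T) \<noteq> {}"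
    and "\<And>p q j. p \<in> {1..r} \<Longrightarrow> q \<in> {1..r} \<Longrightarrow> I p \<inter> I q \<noteq> {} \<Longrightarrow>
      real j \<in> I p \<Longrightarrow> real j \<notin> I q \<Longrightarrow>
      (real j + 1 \<notin> I p \<longrightarrow> real j + 1 \<notin> I q) \<and> (real j - 1 \<notin> I p \<longrightarrow> real j - 1 \<notin> I q)"
  shows "CL_data l r I"
  unfolding CL_data_def using assms by auto

lemma CL_data_pos: "CL_data l r I \<Longrightarrow> 0 < l"
  by (simp add: CL_data_def)

lemma CL_data_interval_union: "CL_data l r I \<Longrightarrow> i \<in> {1..r} \<Longrightarrow> CL_interval_union l (I i)"
  by (simp add: CL_data_def)

lemma CL_data_Helly:
  assumes "CL_data l r I" "T \<subseteq> {1..r}" "\<forall>p\<in>T. \<forall>q\<in>T. I p \<inter> I q \<noteq> {}"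
  shows "\<Inter>(I ` T) \<noteq> {}"
proof -
  have "\<forall>T. T \<subseteq> {1..r} \<longrightarrow> (\<forall>p\<in>T. \<forall>q\<in>T. I p \<inter> I q \<noteq> {}) \<longrightarrow> \<Inter>(I ` T) \<noteq> {}"
    using assms(1) by (simp add: CL_data_def)
  then show ?thesis using assms(2,3) by simp
qed

lemma CL_data_step:
  assumes "CL_data l r I" "p \<in> {1..r}" "q \<in> {1..r}" "I p \<inter> I q \<noteq> {}"
    and "real j \<in> I p" "real j \<notin> I q" "real j + 1 \<notin> I p"
  shows "real j + 1 \<notin> I q"
proof -
  have "\<forall>p\<in>{1..r}. \<forall>q\<in>{1..r}. I p \<inter> I q \<noteq> {} \<longrightarrow>
        (\<forall>j::nat. real j \<in> I p \<and> real j \<notin> I q \<longrightarrow>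
           (real j + 1 \<notin> I p \<longrightarrow> real j + 1 \<notin> I q) \<and>
           (real j - 1 \<notin> I p \<longrightarrow> real j - 1 \<notin> I q))"
    using assms(1) by (simp add: CL_data_def)
  then show ?thesis using assms(2-7) by blast
qed

lemma Ball_sum_iff: "(\<forall>v\<in>A. P v) \<longleftrightarrow> (\<forall>j. Inl j \<in> A \<longrightarrow> P (Inl j)) \<and> (\<forall>i. Inr i \<in> A \<longrightarrow> P (Inr i))"
proof (intro iffI ballI)
  fix v assume "(\<forall>j. Inl j \<in> A \<longrightarrow> P (Inl j)) \<and> (\<forall>i. Inr i \<in> A \<longrightarrow> P (Inr i))" "v \<in> A"
  then show "P v" by (cases v) simp_all
qed simp

context
  fixes l r :: nat and I :: "nat \<Rightarrow> real set" and K :: "(nat + nat) set"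
  assumes data: "CL_data l r I" and K: "K \<subseteq> CL_vertices l r"
    and meet: "\<forall>v\<in>K. \<forall>w\<in>K. CL_sets I v \<inter> CL_sets I w \<noteq> {}"
begin

lemma CL_family_interval_union: "Inr i \<in> K \<Longrightarrow> CL_interval_union l (I i)"
  using CL_data_interval_union[OF data] K by auto

lemma CL_common_point_no_J:
  assumes "\<forall>j. Inl j \<notin> K"
  shows "\<exists>p<l. \<forall>v\<in>K. real p \<in> CL_sets I v"
proof (cases "K = {}")
  case True
  then show ?thesis using CL_data_pos[OF data] by auto
next
  case False
  define T where "T = {i. Inr i \<in> K}"
  have K_eq: "K = Inr ` T"
  proof (intro equalityI subsetI)
    fix x assume "x \<in> K"
    then show "x \<in> Inr ` T" using assms unfolding T_def by (cases x) auto
  qed (auto simp: T_def)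
  have T_sub: "T \<subseteq> {1..r}" using K unfolding T_def by auto
  have T_meet: "\<forall>p\<in>T. \<forall>q\<in>T. I p \<inter> I q \<noteq> {}"
  proof (intro ballI)
    fix p q assume "p \<in> T" "q \<in> T"
    then show "I p \<inter> I q \<noteq> {}"
      using meet[rule_format, of "Inr p" "Inr q"] unfolding T_def by simp
  qed
  obtain y where y: "\<And>i. i \<in> T \<Longrightarrow> y \<in> I i"
    using CL_data_Helly[OF data T_sub T_meet] by blast
  have union: "CL_interval_union l (I i)" if "i \<in> T" for i
    using CL_family_interval_union that unfolding T_def by simp
  obtain i0 where "i0 \<in> T" using False K_eq by blast
  then have "0 \<le> y" "y < real l"
    using CL_interval_union_bounds[OF union y] by blast+
  then have "nat \<lfloor>y\<rfloor> < l" by linarith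
  moreover have "real (nat \<lfloor>y\<rfloor>) \<in> I i" if "i \<in> T" for i
    using CL_interval_union_floor[OF union y] that by blast
  ultimately show ?thesis unfolding K_eq by auto
qed

lemma CL_common_point_two_J:
  assumes "Inl j \<in> K" "Inl (Suc j) \<in> K"
  shows "j < l" "\<forall>v\<in>K. real j \<in> CL_sets I v"
proof -
  show "j < l" using assms(2) K by auto
  show "\<forall>v\<in>K. real j \<in> CL_sets I v"
  proof
    fix v assume "v \<in> K"
    show "real j \<in> CL_sets I v"
    proof (cases v)
      case (Inl j')
      then have "Jset j' \<inter> Jset j \<noteq> {}" "Jset j' \<inter> Jset (Suc j) \<noteq> {}"
        using meet[rule_format, OF \<open>v \<in> K\<close> assms(1)] meet[rule_format, OF \<open>v \<in> K\<close> assms(2)]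
        by simp_all
      then have "j' = j \<or> j' = Suc j" unfolding Jset_Int_Jset_iff by auto
      then show ?thesis
        using Inl of_nat_in_Jset of_nat_minus_one_in_Jset[of "Suc j"] by auto
    next
      case (Inr i)
      then have "I i \<inter> Jset j \<noteq> {}" "I i \<inter> Jset (Suc j) \<noteq> {}"
        using meet[rule_format, OF \<open>v \<in> K\<close> assms(1)] meet[rule_format, OF \<open>v \<in> K\<close> assms(2)]
        by simp_all
      then show ?thesis
        using CL_interval_union_Int_Jset_Suc[OF CL_family_interval_union] \<open>v \<in> K\<close> Inr by simp
    qed
  qed
qed

text \<open>Condition (iv) at the point j - 1: a set through j - 1 but not j forces every
  neighbour avoiding j - 1 to avoid j as well.\<close>

lemma CL_common_point_near_J:
  assumes "0 < j" "\<And>i. Inr i \<in> K \<Longrightarrow> I i \<inter> Jset j \<noteq> {}"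
  shows "(\<forall>i. Inr i \<in> K \<longrightarrow> real j - 1 \<in> I i) \<or>
    (\<exists>i. Inr i \<in> K) \<and> (\<forall>i. Inr i \<in> K \<longrightarrow> real j \<in> I i)"
proof (cases "\<forall>i. Inr i \<in> K \<longrightarrow> real j - 1 \<in> I i")
  case False
  then obtain i1 where i1: "Inr i1 \<in> K" "real j - 1 \<notin> I i1" by blast
  have near: "real j \<in> I i \<or> real j - 1 \<in> I i" if "Inr i \<in> K" for i
    using CL_interval_union_Int_Jset[OF CL_family_interval_union[OF that] assms(2)[OF that]]
    by blast
  have "real j \<in> I i" if i: "Inr i \<in> K" for i
  proof (rule ccontr)
    assume j_notin: "real j \<notin> I i"
    have j1: "real (j - 1) = real j - 1" "real (j - 1) + 1 = real j" using assms(1) by auto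
    have "I i \<inter> I i1 \<noteq> {}" using meet[rule_format, OF i i1(1)] by simp
    moreover have "i \<in> {1..r}" "i1 \<in> {1..r}" using K i i1(1) by auto
    ultimately have "real j \<notin> I i1"
      using CL_data_step[OF data, of i i1 "j - 1"] near[OF i] j_notin i1(2) j1 by auto
    then show False using near[OF i1(1)] i1(2) by blast
  qed
  then show ?thesis using i1(1) by blast
qed simp

lemma CL_common_point_one_J:
  assumes "Inl j \<in> K" "\<forall>j'. Inl j' \<in> K \<longrightarrow> j' = j"
  shows "\<exists>p<l. \<forall>v\<in>K. real p \<in> CL_sets I v"
proof -
  have meet_J: "I i \<inter> Jset j \<noteq> {}" if "Inr i \<in> K" for i
    using meet[rule_format, OF that assms(1)] by simp
  have "j \<le> l" using assms(1) K by auto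
  show ?thesis
  proof (cases "j = 0")
    case True
    then have "real 0 \<in> I i" if "Inr i \<in> K" for i
      using CL_interval_union_Int_Jset[OF CL_family_interval_union[OF that] meet_J[OF that]] by simp
    then show ?thesis
      using CL_data_pos[OF data] assms(2) True of_nat_in_Jset[of 0]
      by (intro exI[of _ 0]) (auto simp: Ball_sum_iff)
  next
    case False
    then consider "\<forall>i. Inr i \<in> K \<longrightarrow> real j - 1 \<in> I i"
      | i where "Inr i \<in> K" "\<forall>i. Inr i \<in> K \<longrightarrow> real j \<in> I i"
      using CL_common_point_near_J meet_J by blast
    then show ?thesis
    proof cases
      case 1
      then show ?thesis
        using \<open>j \<le> l\<close> False assms(2) of_nat_minus_one_in_Jset[of j]
        by (intro exI[of _ "j - 1"]) (auto simp: Ball_sum_iff)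
    next
      case (2 i)
      then have "real j < real l"
        using CL_interval_union_bounds(2)[OF CL_family_interval_union[OF 2(1)]] by blast
      then have "j < l" by simp
      then show ?thesis
        using 2(2) assms(2) of_nat_in_Jset[of j]
        by (intro exI[of _ j]) (auto simp: Ball_sum_iff)
    qed
  qed
qed

lemma CL_common_point:
  shows "\<exists>p<l. \<forall>v\<in>K. real p \<in> CL_sets I v"
proof -
  consider "\<forall>j. Inl j \<notin> K"
    | j where "Inl j \<in> K" "Inl (Suc j) \<in> K"
    | j where "Inl j \<in> K" "\<forall>j'. Inl j' \<in> K \<longrightarrow> j' = j"
  proof -
    fix thesis
    assume none: "\<forall>j. Inl j \<notin> K \<Longrightarrow> thesis"
      and pair: "\<And>j. Inl j \<in> K \<Longrightarrow> Inl (Suc j) \<in> K \<Longrightarrow> thesis"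
      and single: "\<And>j. Inl j \<in> K \<Longrightarrow> \<forall>j'. Inl j' \<in> K \<longrightarrow> j' = j \<Longrightarrow> thesis"
    show thesis
    proof (cases "\<forall>j. Inl j \<notin> K")
      case False
      then obtain j where j: "Inl j \<in> K" by blast
      have "j' = j \<or> j' = Suc j \<or> j = Suc j'" if "Inl j' \<in> K" for j'
        using meet[rule_format, OF that j] Jset_Int_Jset_iff by simp
      then show thesis using pair single j by blast
    qed (rule none)
  qed
  then show ?thesis
  proof cases
    case 1
    then show ?thesis by (rule CL_common_point_no_J)
  next
    case (2 j)
    then show ?thesis using CL_common_point_two_J by blast
  next
    case (3 j)
    then show ?thesis by (rule CL_common_point_one_J)
  qed
qed

end

lemma CL_clique_common_point:
  assumes "CL_data l r I" "clique (CL_vertices l r) (inter_adj (CL_sets I)) K"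
  shows "\<exists>p<l. \<forall>v\<in>K. real p \<in> CL_sets I v"
proof (rule CL_common_point)
  show "CL_data l r I" "K \<subseteq> CL_vertices l r" using assms by (auto simp: clique_def)
  show "\<forall>v\<in>K. \<forall>w\<in>K. CL_sets I v \<inter> CL_sets I w \<noteq> {}"
  proof (intro ballI)
    fix v w assume "v \<in> K" "w \<in> K"
    show "CL_sets I v \<inter> CL_sets I w \<noteq> {}"
    proof (cases "v = w")
      case True
      have "CL_sets I v \<noteq> {}"
      proof (cases v)
        case (Inr i)
        then have "i \<in> {1..r}" using assms(2) \<open>v \<in> K\<close> by (auto simp: clique_def)
        then show ?thesis
          using CL_interval_union_nonempty[OF CL_data_interval_union[OF assms(1)]] Inr by simp
      qed (use of_nat_in_Jset in auto)
      then show ?thesis using True by simp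
    next
      case False
      then show ?thesis
        using assms(2) \<open>v \<in> K\<close> \<open>w \<in> K\<close> by (auto simp: clique_def inter_adj_def)
    qed
  qed
qed

lemma CL_num_max_cliques_le:
  assumes "CL_data l r I"
  shows "num_max_cliques (CL_vertices l r) (inter_adj (CL_sets I)) \<le> l"
proof -
  let ?W = "CL_vertices l r" and ?F = "inter_adj (CL_sets I)"
  define point_clique where "point_clique p = {v \<in> ?W. real p \<in> CL_sets I v}" for p :: nat
  have clique: "clique ?W ?F (point_clique p)" for p
    unfolding clique_def point_clique_def inter_adj_def by blast
  have "{K. maximal_clique ?W ?F K} \<subseteq> point_clique ` {..<l}"
  proof
    fix K assume "K \<in> {K. maximal_clique ?W ?F K}"
    then have max: "maximal_clique ?W ?F K" by simp
    then have "clique ?W ?F K" by (simp add: maximal_clique_def)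
    then obtain p where p: "p < l" "\<forall>v\<in>K. real p \<in> CL_sets I v"
      using CL_clique_common_point[OF assms] by blast
    then have "K \<subseteq> point_clique p"
      using \<open>clique ?W ?F K\<close> unfolding point_clique_def clique_def by blast
    then have "point_clique p = K" using max clique by (simp add: maximal_clique_def)
    then show "K \<in> point_clique ` {..<l}" using p(1) by blast
  qed
  then have "num_max_cliques ?W ?F \<le> card (point_clique ` {..<l})"
    unfolding num_max_cliques_def by (rule card_mono[OF finite_imageI[OF finite_lessThan]])
  also have "\<dots> \<le> l" using card_image_le[of "{..<l}" point_clique] by simp
  finally show ?thesis .
qed

lemma CL_induced_path:
  "induced_path (CL_vertices l r) (inter_adj (CL_sets I)) (map Inl [0..<Suc l])"
  unfolding induced_path_def
proof (intro conjI allI impI)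
  show "distinct (map Inl [0..<Suc l] :: (nat + nat) list)"
    by (simp add: distinct_map del: upt_Suc)
  fix i j assume "i < length (map Inl [0..<Suc l] :: (nat + nat) list)"
    "j < length (map Inl [0..<Suc l] :: (nat + nat) list)" "i < j"
  then show "inter_adj (CL_sets I) (map Inl [0..<Suc l] ! i) (map Inl [0..<Suc l] ! j) \<longleftrightarrow> j = i + 1"
    using Jset_Int_Jset_iff[of i j] by (simp add: inter_adj_def del: upt_Suc)
qed (auto simp del: upt_Suc)

lemma CL_lip_eq_num_max_cliques:
  assumes "CL_data l r I"
  shows "lip (CL_vertices l r) (inter_adj (CL_sets I)) =
    num_max_cliques (CL_vertices l r) (inter_adj (CL_sets I))"
proof -
  let ?W = "CL_vertices l r" and ?F = "inter_adj (CL_sets I)"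
  have finite: "finite ?W" by (simp add: CL_vertices_def)
  have "?W \<noteq> {}" using CL_vertices_iff(1)[of 0 l r] by blast
  moreover have "symp_on ?W ?F" by (auto simp: symp_on_def inter_adj_def)
  ultimately have "lip ?W ?F \<le> num_max_cliques ?W ?F"
    using lip_le_num_max_cliques[OF finite] by blast
  moreover have "l \<le> lip ?W ?F"
    using induced_path_length_le_lip[OF finite CL_induced_path] by simp
  ultimately show ?thesis using CL_num_max_cliques_le[OF assms] by linarith
qed

lemma lip_eq_num_max_cliques_if_connected_CL_graph:
  assumes "connected_CL_graph C E"
  shows "lip C E = num_max_cliques C E"
  using assms CL_lip_eq_num_max_cliques lip_graph_iso num_max_cliques_graph_iso
  unfolding connected_CL_graph_def by metis

section \<open>Graphs with \<open>\<ell> = c\<close> are CL-graphs\<close>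

lemma bij_betw_case_sum:
  assumes "bij_betw f A C" "bij_betw g B D" "C \<inter> D = {}"
  shows "bij_betw (case_sum f g) (Inl ` A \<union> Inr ` B) (C \<union> D)"
proof (rule bij_betw_combine[OF _ _ assms(3)])
  show "bij_betw (case_sum f g) (Inl ` A) C"
    using bij_betw_comp_iff[OF bij_betw_imageI[OF inj_Inl[of A] refl], of "case_sum f g" C] assms(1)
    by (simp add: comp_def)
  show "bij_betw (case_sum f g) (Inr ` B) D"
    using bij_betw_comp_iff[OF bij_betw_imageI[OF inj_Inr[of B] refl], of "case_sum f g" D] assms(2)
    by (simp add: comp_def)
qed

text \<open>The situation of a longest induced path when equality \<open>\<ell> = c\<close> holds: the chosen
  cliques of its edges are all the maximal cliques.\<close>

locale clique_path =
  fixes C :: "'a set" and E :: "'a \<Rightarrow> 'a \<Rightarrow> bool" and xs :: "'a list"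
  assumes finite: "finite C" and sym: "symp_on C E" and irrefl: "irreflp_on C E"
    and path: "induced_path C E xs" and two_le_length: "2 \<le> length xs"
    and maximal_clique_edge_clique:
      "maximal_clique C E K \<Longrightarrow> \<exists>p < length xs - 1. K = edge_clique C E xs p"
begin

abbreviation Q :: "nat \<Rightarrow> 'a set" where
  "Q \<equiv> edge_clique C E xs"

definition clique_indices :: "'a \<Rightarrow> nat set" where
  "clique_indices x = {p. p < length xs - 1 \<and> x \<in> Q p}"

lemma edge_clique_Q:
  assumes "p < length xs - 1"
  shows "clique C E (Q p)" "xs ! p \<in> Q p" "xs ! Suc p \<in> Q p"
  using edge_clique_spec[OF finite sym path, of p] assms by (auto simp: maximal_clique_def)

lemma nth_in_Q_iff: "p < length xs - 1 \<Longrightarrow> j < length xs \<Longrightarrow> xs ! j \<in> Q p \<longleftrightarrow> j = p \<or> j = Suc p"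
  using nth_in_edge_clique_iff[OF finite sym path] by simp

lemma clique_subset_Q:
  assumes "clique C E K"
  obtains p where "p < length xs - 1" "K \<subseteq> Q p"
proof -
  obtain K' where "maximal_clique C E K'" "K \<subseteq> K'"
    using clique_subset_maximal_clique[OF finite assms] .
  then show ?thesis using maximal_clique_edge_clique that by blast
qed

lemma path_vertex_in_C: "j < length xs \<Longrightarrow> xs ! j \<in> C"
  using path by (auto simp: induced_path_def)

lemma adj_commute: "x \<in> C \<Longrightarrow> y \<in> C \<Longrightarrow> E x y \<longleftrightarrow> E y x"
  using sym by (auto simp: symp_on_def)

lemma clique_of_adjacent:
  "x \<in> C \<Longrightarrow> y \<in> C \<Longrightarrow> z \<in> C \<Longrightarrow> E x y \<Longrightarrow> E x z \<Longrightarrow> E y z \<Longrightarrow> clique C E {x, y, z}"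
  using adj_commute by (auto simp: clique_def)

lemma clique_indices_bounded: "p \<in> clique_indices x \<Longrightarrow> p < length xs - 1"
  by (simp add: clique_indices_def)

lemma finite_clique_indices: "finite (clique_indices x)"
  by (rule finite_subset[of _ "{..<length xs - 1}"]) (auto simp: clique_indices_def)

lemma clique_indices_nonempty:
  assumes "x \<in> C"
  shows "clique_indices x \<noteq> {}"
proof -
  have "clique C E {x}" using assms by (simp add: clique_def)
  then obtain p where "p < length xs - 1" "{x} \<subseteq> Q p" by (rule clique_subset_Q)
  then show ?thesis by (auto simp: clique_indices_def)
qed

lemma adj_path_iff:
  assumes x: "x \<in> C - set xs" and j: "j < length xs"
  shows "E x (xs ! j) \<longleftrightarrow> j \<in> clique_indices x \<union> Suc ` clique_indices x"
proof
  assume "E x (xs ! j)"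
  then have "clique C E {x, xs ! j}"
    using x path_vertex_in_C[OF j] adj_commute by (auto simp: clique_def)
  then obtain p where p: "p < length xs - 1" "{x, xs ! j} \<subseteq> Q p" by (rule clique_subset_Q)
  then have "j = p \<or> j = Suc p" using nth_in_Q_iff j by blast
  then show "j \<in> clique_indices x \<union> Suc ` clique_indices x"
    using p unfolding clique_indices_def by auto
next
  assume "j \<in> clique_indices x \<union> Suc ` clique_indices x"
  then obtain p where p: "p < length xs - 1" "x \<in> Q p" "j = p \<or> j = Suc p"
    unfolding clique_indices_def by auto
  then have "xs ! j \<in> Q p" using edge_clique_Q(2,3) by auto
  moreover have "x \<noteq> xs ! j" using x j by auto
  ultimately show "E x (xs ! j)" using edge_clique_Q(1)[OF p(1)] p(2) by (auto simp: clique_def)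
qed

lemma adj_off_path_iff:
  assumes "x \<in> C" "y \<in> C" "x \<noteq> y"
  shows "E x y \<longleftrightarrow> clique_indices x \<inter> clique_indices y \<noteq> {}"
proof
  assume "E x y"
  then have "clique C E {x, y}" using assms adj_commute by (auto simp: clique_def)
  then obtain p where "p < length xs - 1" "{x, y} \<subseteq> Q p" by (rule clique_subset_Q)
  then show "clique_indices x \<inter> clique_indices y \<noteq> {}" by (auto simp: clique_indices_def)
next
  assume "clique_indices x \<inter> clique_indices y \<noteq> {}"
  then obtain p where "p < length xs - 1" "x \<in> Q p" "y \<in> Q p" by (auto simp: clique_indices_def)
  then show "E x y" using edge_clique_Q(1) assms(3) by (auto simp: clique_def)
qed

lemma clique_with_edge_subset_Q:
  assumes "clique C E K" "Suc p < length xs" "xs ! p \<in> K" "xs ! Suc p \<in> K"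
  shows "K \<subseteq> Q p"
proof -
  obtain q where q: "q < length xs - 1" "K \<subseteq> Q q" using assms(1) by (rule clique_subset_Q)
  then have "p = q \<or> p = Suc q" "Suc p = q \<or> Suc p = Suc q"
    using nth_in_Q_iff assms(2-4) by (meson Suc_lessD subsetD)+
  then have "q = p" by auto
  then show ?thesis using q by simp
qed

lemma clique_indices_step:
  assumes x: "x \<in> C - set xs" and y: "y \<in> C - set xs" and "E x y"
    and "p \<in> clique_indices x" "Suc p \<in> clique_indices y"
  shows "p \<in> clique_indices y \<or> Suc p \<in> clique_indices x"
proof -
  have p: "Suc (Suc p) < length xs" "x \<in> Q p" "y \<in> Q (Suc p)"
    using assms(4,5) by (auto simp: clique_indices_def)
  have "E x (xs ! Suc p)" "E y (xs ! Suc p)"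
    using adj_path_iff[OF x] adj_path_iff[OF y] assms(4,5) p(1) by auto
  then have "clique C E {x, y, xs ! Suc p}"
    using clique_of_adjacent x y path_vertex_in_C p(1) \<open>E x y\<close> by simp
  then obtain q where q: "q < length xs - 1" "{x, y, xs ! Suc p} \<subseteq> Q q"
    by (rule clique_subset_Q)
  then have "Suc p = q \<or> Suc p = Suc q" using nth_in_Q_iff p(1) by simp
  then show ?thesis using q by (auto simp: clique_indices_def)
qed

lemma no_unit_gaps_clique_indices:
  assumes x: "x \<in> C - set xs"
  shows "no_unit_gaps (clique_indices x)"
  unfolding no_unit_gaps_def
proof (intro allI impI)
  fix p assume "p \<in> clique_indices x" "Suc (Suc p) \<in> clique_indices x"
  then have p: "Suc (Suc (Suc p)) < length xs" "x \<in> Q p" "x \<in> Q (Suc (Suc p))"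
    by (auto simp: clique_indices_def)
  have "E x (xs ! Suc p)" "E x (xs ! Suc (Suc p))"
    using adj_path_iff[OF x] \<open>p \<in> clique_indices x\<close> \<open>Suc (Suc p) \<in> clique_indices x\<close> p(1)
    by auto
  moreover have "E (xs ! Suc p) (xs ! Suc (Suc p))"
    using induced_path_adj_iff[OF sym path] p(1) by simp
  ultimately have "clique C E {x, xs ! Suc p, xs ! Suc (Suc p)}"
    using clique_of_adjacent x path_vertex_in_C p(1) by simp
  then have "{x, xs ! Suc p, xs ! Suc (Suc p)} \<subseteq> Q (Suc p)"
    by (rule clique_with_edge_subset_Q) (use p(1) in simp_all)
  then have "x \<in> Q (Suc p)" by simp
  then show "Suc p \<in> clique_indices x" using p(1) by (simp add: clique_indices_def)
qed

text \<open>The CL-representation: the path vertex xs ! j becomes J_j, and the i-th vertex g i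
  off the path becomes the interval model of its clique indices.\<close>

context
  fixes g :: "nat \<Rightarrow> 'a" and r :: nat
  assumes g: "bij_betw g {1..r} (C - set xs)"
begin

abbreviation off_path_set :: "nat \<Rightarrow> real set" where
  "off_path_set i \<equiv> thicken (clique_indices (g i))"

lemma off_path_vertex: "i \<in> {1..r} \<Longrightarrow> g i \<in> C - set xs"
  using bij_betw_apply[OF g] by blast

lemma off_path_vertex_eq_iff: "i \<in> {1..r} \<Longrightarrow> k \<in> {1..r} \<Longrightarrow> g i = g k \<longleftrightarrow> i = k"
  using bij_betw_imp_inj_on[OF g] by (auto dest: inj_onD)

lemma off_path_sets_meet_iff_adj:
  assumes "i \<in> {1..r}" "k \<in> {1..r}" "i \<noteq> k"
  shows "off_path_set i \<inter> off_path_set k \<noteq> {} \<longleftrightarrow> E (g i) (g k)"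
  using adj_off_path_iff off_path_vertex off_path_vertex_eq_iff assms thicken_Int_thicken_iff
  by auto

lemma CL_data_clique_indices: "CL_data (length xs - 1) r off_path_set"
proof (rule CL_dataI)
  show "1 \<le> length xs - 1" using two_le_length by simp
next
  fix i assume "i \<in> {1..r}"
  then show "CL_interval_union (length xs - 1) (off_path_set i)"
    using thicken_CL_interval_union finite_clique_indices clique_indices_nonempty
      no_unit_gaps_clique_indices off_path_vertex clique_indices_bounded by simp
next
  fix T assume T: "T \<subseteq> {1..r}"
    and meet: "\<forall>p\<in>T. \<forall>q\<in>T. off_path_set p \<inter> off_path_set q \<noteq> {}"
  have "clique C E (g ` T)"
    unfolding clique_def
  proof (intro conjI ballI impI)
    show "g ` T \<subseteq> C" using T off_path_vertex by blast
    fix x y assume "x \<in> g ` T" "y \<in> g ` T" "x \<noteq> y"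
    then obtain p q where "p \<in> T" "q \<in> T" "x = g p" "y = g q" "p \<noteq> q" by blast
    then show "E x y" using meet off_path_sets_meet_iff_adj T by blast
  qed
  then obtain m where m: "m < length xs - 1" "g ` T \<subseteq> Q m" by (rule clique_subset_Q)
  then have "real m \<in> off_path_set p" if "p \<in> T" for p
    using that by (auto simp: of_nat_in_thicken_iff clique_indices_def)
  then show "\<Inter>(off_path_set ` T) \<noteq> {}" by blast
next
  fix p q j
  assume p: "p \<in> {1..r}" and q: "q \<in> {1..r}"
    and meet: "off_path_set p \<inter> off_path_set q \<noteq> {}"
    and j: "real j \<in> off_path_set p" "real j \<notin> off_path_set q"
  then have "p \<noteq> q" by blast
  then have "E (g p) (g q)" "E (g q) (g p)"
    using off_path_sets_meet_iff_adj[OF p q] off_path_sets_meet_iff_adj[OF q p] meet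
    by (auto simp: Int_commute)
  then show "(real j + 1 \<notin> off_path_set p \<longrightarrow> real j + 1 \<notin> off_path_set q) \<and>
      (real j - 1 \<notin> off_path_set p \<longrightarrow> real j - 1 \<notin> off_path_set q)"
    using thicken_step_condition[OF _ _ j] clique_indices_step off_path_vertex p q by blast
qed

lemma Inl_in_CL_vertices_iff: "Inl j \<in> CL_vertices (length xs - 1) r \<longleftrightarrow> j < length xs"
  using two_le_length by auto

lemma CL_adj_iff:
  assumes "u \<in> CL_vertices (length xs - 1) r" "v \<in> CL_vertices (length xs - 1) r"
  shows "inter_adj (CL_sets off_path_set) u v \<longleftrightarrow>
    E (case_sum (nth xs) g u) (case_sum (nth xs) g v)"
proof -
  have path_off_path: "Jset j \<inter> off_path_set k \<noteq> {} \<longleftrightarrow> E (g k) (xs ! j)"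
    if "j < length xs" "k \<in> {1..r}" for j k
    using adj_path_iff[OF off_path_vertex[OF that(2)] that(1)] thicken_Int_Jset_iff
    by (simp add: Int_commute)
  show ?thesis
  proof (cases u; cases v)
    fix i j assume "u = Inl i" "v = Inl j"
    then have "i < length xs" "j < length xs" using assms Inl_in_CL_vertices_iff by auto
    then show ?thesis
      using \<open>u = Inl i\<close> \<open>v = Inl j\<close> induced_path_adj_iff[OF sym path] Jset_Int_Jset_iff[of i j]
        irreflp_onD[OF irrefl path_vertex_in_C]
      by (auto simp: inter_adj_def)
  next
    fix i k assume "u = Inl i" "v = Inr k"
    then have "i < length xs" "k \<in> {1..r}" using assms Inl_in_CL_vertices_iff by auto
    then show ?thesis
      using \<open>u = Inl i\<close> \<open>v = Inr k\<close> path_off_path adj_commute[OF path_vertex_in_C] off_path_vertex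
      by (auto simp: inter_adj_def)
  next
    fix k j assume "u = Inr k" "v = Inl j"
    then have "j < length xs" "k \<in> {1..r}" using assms Inl_in_CL_vertices_iff by auto
    then show ?thesis
      using \<open>u = Inr k\<close> \<open>v = Inl j\<close> path_off_path by (auto simp: inter_adj_def Int_commute)
  next
    fix i k assume "u = Inr i" "v = Inr k"
    then have "i \<in> {1..r}" "k \<in> {1..r}" using assms by auto
    show ?thesis
    proof (cases "i = k")
      case True
      then show ?thesis
        using \<open>u = Inr i\<close> \<open>v = Inr k\<close> irreflp_onD[OF irrefl] off_path_vertex \<open>i \<in> {1..r}\<close>
        by (auto simp: inter_adj_def)
    next
      case False
      then show ?thesis
        using \<open>u = Inr i\<close> \<open>v = Inr k\<close> off_path_sets_meet_iff_adj \<open>i \<in> {1..r}\<close> \<open>k \<in> {1..r}\<close>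
        by (simp add: inter_adj_def)
    qed
  qed
qed

lemma CL_graph_iso:
  "graph_iso (CL_vertices (length xs - 1) r) (inter_adj (CL_sets off_path_set)) C E"
  unfolding graph_iso_def
proof (intro exI conjI)
  have "distinct xs" using path by (simp add: induced_path_def)
  then have "bij_betw (case_sum (nth xs) g) (Inl ` {..<length xs} \<union> Inr ` {1..r})
      (set xs \<union> (C - set xs))"
    using bij_betw_case_sum[OF bij_betw_nth[OF _ refl refl] g] by blast
  moreover have "CL_vertices (length xs - 1) r = Inl ` {..<length xs} \<union> Inr ` {1..r}"
    using two_le_length by (auto simp: CL_vertices_def)
  moreover have "set xs \<union> (C - set xs) = C" using path by (auto simp: induced_path_def)
  ultimately show "bij_betw (case_sum (nth xs) g) (CL_vertices (length xs - 1) r) C" by simp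
qed (use CL_adj_iff in blast)

end

theorem is_connected_CL_graph: "connected_CL_graph C E"
proof -
  obtain g where g: "bij_betw g {1..card (C - set xs)} (C - set xs)"
    using ex_bij_betw_nat_finite_1 finite by blast
  note data = CL_data_clique_indices[OF g]
  note iso = graph_iso_sym[OF CL_graph_iso[OF g]]
  from data iso show ?thesis unfolding connected_CL_graph_def by blast
qed

end

lemma connected_CL_graph_if_lip_eq:
  assumes "finite C" "C \<noteq> {}" "symp_on C E" "irreflp_on C E"
    and eq: "lip C E = num_max_cliques C E"
  shows "connected_CL_graph C E"
proof -
  obtain xs where xs: "induced_path C E xs" "length xs - 1 = lip C E"
    using longest_induced_path_exists[OF assms(1,2)] .
  have "clique C E {}" by (simp add: clique_def)
  then obtain K where "maximal_clique C E K"
    using clique_subset_maximal_clique[OF assms(1)] by blast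
  then have "{K. maximal_clique C E K} \<noteq> {}" by blast
  then have "0 < num_max_cliques C E"
    unfolding num_max_cliques_def using finite_maximal_cliques[OF assms(1)]
    by (simp add: card_gt_0_iff)
  then have "2 \<le> length xs" using xs(2) eq by linarith
  have "card (edge_clique C E xs ` {..<length xs - 1}) = card {K. maximal_clique C E K}"
    using card_edge_cliques[OF assms(1,3) xs(1)] xs(2) eq by (simp add: num_max_cliques_def)
  then have "edge_clique C E xs ` {..<length xs - 1} = {K. maximal_clique C E K}"
    using card_subset_eq[OF finite_maximal_cliques[OF assms(1)]
        edge_cliques_subset_maximal_cliques[OF assms(1,3) xs(1)]] by blast
  then interpret clique_path C E xs
    using assms(1,3,4) xs(1) \<open>2 \<le> length xs\<close> by unfold_locales auto
  show ?thesis by (rule is_connected_CL_graph)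
qed

theorem theorem2p3:
  fixes V :: "'a set" and E :: "'a \<Rightarrow> 'a \<Rightarrow> bool"
  assumes "finite V" and "V \<noteq> {}"
    and "\<forall>x\<in>V. \<forall>y\<in>V. E x y \<longrightarrow> E y x"
    and "\<forall>x\<in>V. \<not> E x x"
  shows "ell V E = num_max_cliques V E \<longleftrightarrow> CL_graph V E"
proof -
  have sym: "symp_on V E" using assms(3) by (simp add: symp_on_def)
  have component_iff: "lip C E = num_max_cliques C E \<longleftrightarrow> connected_CL_graph C E"
    if C: "C \<in> components V E" for C
  proof -
    have "C \<subseteq> V" "C \<noteq> {}" using component_subset[OF C] component_nonempty[OF C] .
    then have "finite C" "symp_on C E" "irreflp_on C E"
      using finite_subset[OF _ assms(1)] symp_on_subset[OF sym] assms(4)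
      by (auto simp: irreflp_on_def)
    with \<open>C \<noteq> {}\<close> show ?thesis
      using connected_CL_graph_if_lip_eq lip_eq_num_max_cliques_if_connected_CL_graph by blast
  qed
  have "ell V E = num_max_cliques V E \<longleftrightarrow> (\<forall>C\<in>components V E. lip C E = num_max_cliques C E)"
    by (rule ell_eq_num_max_cliques_iff[OF assms(1,2) sym])
  also have "\<dots> \<longleftrightarrow> CL_graph V E"
    unfolding CL_graph_def using component_iff by blast
  finally show ?thesis .
qed

end
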